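(* Let $X$ be a totally disconnected compact Hausdorff space and let $A$ be a unital $C(X)$-algebra such that every fibre $A_x$, $x\in X$, is properly infinite. Then $A$ is properly infinite.
   Context: A $C(X)$-algebra is a $C^*$-algebra $A$ with a unital $*$-homomorphism from $C(X)$ into the center of the multiplier algebra of $A$; its fibre at $x$ is $A_x=A/C_0(X\setminus\{x\})A$. A unital $C^*$-algebra is properly infinite if there are mutually orthogonal projections $e,f$ with $e\sim1\sim f$ (Murray–von Neumann equivalence). *)

theory Defs
  imports "HOL-Analysis.Analysis"
begin

text \<open>Complex scalar multiplication sc and the involution st are
explicit parameters, since HOL has no complex-vector-space or star-algebra class.\<close>

definition cstar_algebra :: "(complex \<Rightarrow> 'a::{real_normed_algebra_1,banach} \<Rightarrow> 'a) \<Rightarrow> ('a \<Rightarrow> 'a) \<Rightarrow> bool"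
  where "cstar_algebra sc st \<longleftrightarrow>
     (\<forall>r a. sc (complex_of_real r) a = r *\<^sub>R a) \<and>
     (\<forall>c d a. sc c (sc d a) = sc (c * d) a) \<and>
     (\<forall>c a b. sc c (a + b) = sc c a + sc c b) \<and>
     (\<forall>c d a. sc (c + d) a = sc c a + sc d a) \<and>
     (\<forall>c a b. sc c (a * b) = sc c a * b \<and> sc c (a * b) = a * sc c b) \<and>
     (\<forall>c a. norm (sc c a) = cmod c * norm a) \<and>
     (\<forall>a. st (st a) = a) \<and>
     (\<forall>a b. st (a + b) = st a + st b) \<and>
     (\<forall>c a. st (sc c a) = sc (cnj c) (st a)) \<and>
     (\<forall>a b. st (a * b) = st b * st a) \<and>
     (\<forall>a. norm (st a * a) = norm a ^ 2)"

text \<open>A unital C(X)-algebra structure on a unital C*-algebra: a unital *-homomorphism phi from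
C(X) (continuous complex functions on X) into the centre of A (= centre of M(A), A unital).\<close>

definition cx_algebra ::
  "(complex \<Rightarrow> 'a::{real_normed_algebra_1,banach} \<Rightarrow> 'a) \<Rightarrow> ('a \<Rightarrow> 'a) \<Rightarrow> (('x::topological_space \<Rightarrow> complex) \<Rightarrow> 'a) \<Rightarrow> bool"
  where "cx_algebra sc st \<phi> \<longleftrightarrow>
     \<phi> (\<lambda>_. 1) = 1 \<and>
     (\<forall>f g. continuous_on UNIV f \<longrightarrow> continuous_on UNIV g \<longrightarrow>
        \<phi> (\<lambda>t. f t + g t) = \<phi> f + \<phi> g \<and> \<phi> (\<lambda>t. f t * g t) = \<phi> f * \<phi> g) \<and>
     (\<forall>c f. continuous_on UNIV f \<longrightarrow> \<phi> (\<lambda>t. c * f t) = sc c (\<phi> f)) \<and>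
     (\<forall>f. continuous_on UNIV f \<longrightarrow> \<phi> (\<lambda>t. cnj (f t)) = st (\<phi> f)) \<and>
     (\<forall>f a. continuous_on UNIV f \<longrightarrow> \<phi> f * a = a * \<phi> f)"

text \<open>The ideal C_0(X - {x}) A: closed linear span of products phi(g) a with g continuous,
g(x) = 0 (finite sums of such products are already closed under complex scalars).\<close>

definition fibre_ideal :: "(('x::topological_space \<Rightarrow> complex) \<Rightarrow> 'a::{real_normed_algebra_1,banach}) \<Rightarrow> 'x \<Rightarrow> 'a set"
  where "fibre_ideal \<phi> x = closure
     {(\<Sum>i<n. \<phi> (g i) * b i) | (n::nat) (g::nat \<Rightarrow> 'x \<Rightarrow> complex) (b::nat \<Rightarrow> 'a). \<forall>i<n. continuous_on UNIV (g i) \<and> g i x = 0}"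

text \<open>Proper infiniteness of the quotient A/I, written with representatives in A:
a \<equiv> b means a - b \<in> I.\<close>

definition properly_infinite_mod :: "('a::real_normed_algebra_1 \<Rightarrow> 'a) \<Rightarrow> 'a set \<Rightarrow> bool"
  where "properly_infinite_mod st I \<longleftrightarrow>
    (\<exists>e f v w.
       e * e - e \<in> I \<and> st e - e \<in> I \<and> f * f - f \<in> I \<and> st f - f \<in> I \<and>
       e * f \<in> I \<and>
       st v * v - 1 \<in> I \<and> v * st v - e \<in> I \<and>
       st w * w - 1 \<in> I \<and> w * st w - f \<in> I)"

definition properly_infinite :: "('a::real_normed_algebra_1 \<Rightarrow> 'a) \<Rightarrow> 'a \<Rightarrow> bool"
  where "properly_infinite st (u::'a) \<longleftrightarrow>
    (\<exists>e f v w.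
       e * e = e \<and> st e = e \<and> f * f = f \<and> st f = f \<and> e * f = 0 \<and>
       st v * v = 1 \<and> v * st v = e \<and> st w * w = 1 \<and> w * st w = f)"

end

theory Submission
  imports Defs "HOL-Computational_Algebra.Formal_Power_Series"
begin

text \<open>
  For a clopen set U let \<open>p\<^sub>U = \<phi>(1\<^sub>U)\<close>, a central projection. Call a central
  projection p \<^emph>\<open>corner properly infinite\<close> if there are \<open>b\<^sub>1, b\<^sub>2\<close> with \<open>b\<^sub>i\<^sup>* b\<^sub>i = p\<close>,
  \<open>p b\<^sub>i = b\<^sub>i\<close> and \<open>b\<^sub>1\<^sup>* b\<^sub>2 = 0\<close>; for \<open>p = 1\<close> this is proper infiniteness of A.
  \<^item> Topology: X has a base of clopen sets (quasi-components are points).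
  \<^item> C*-algebra: elements that are isometries with almost orthogonal ranges up to 1/100 on
    the corner of p can be corrected, using the power series of \<open>(1 - y)^{-1/2}\<close>, into
    exact ones; the property is inherited by smaller central projections and is additive
    over orthogonal ones.
  \<^item> Local step: from the fibre at x we get v, w with \<open>v\<^sup>*v - 1, w\<^sup>*w - 1, v\<^sup>*w\<close> in the fibre
    ideal; these become small after cutting down by \<open>p\<^sub>U\<close> for a clopen neighbourhood U of x.
  \<^item> Global step: finitely many such U cover X; disjointify and add up, reaching \<open>p\<^sub>X = 1\<close>.
\<close>

abbreviation clopen :: "'x::topological_space set \<Rightarrow> bool"
  where "clopen U \<equiv> open U \<and> closed U"

text \<open>In a compact Hausdorff space whose connected components are points, every point has a
  base of clopen neighbourhoods: quasi-components coincide with components, so the point can be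
  separated from the compact complement of any neighbourhood by a clopen set.\<close>

lemma totally_disconnected_clopen_base:
  fixes x :: "'x::t2_space"
  assumes cpt: "compact (UNIV::'x set)"
    and tdisc: "\<forall>x::'x. connected_component_set UNIV x = {x}"
    and N: "open N" "x \<in> N"
  shows "\<exists>U. clopen U \<and> x \<in> U \<and> U \<subseteq> N"
proof -
  have "Hausdorff_space (euclidean :: 'x topology)"
    unfolding Hausdorff_space_def by (metis disjnt_def open_openin separation_t2 topspace_euclidean)
  moreover have "compact_space (euclidean :: 'x topology)"
    using cpt by (simp add: compact_space_def)
  ultimately have quasi: "quasi_component_of euclidean x = connected_component_of euclidean x"
    by (intro quasi_eq_connected_component_of) simp
  have "connected_component_of euclidean x y \<longleftrightarrow> y \<in> connected_component_set UNIV x" for y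
    unfolding connected_component_of_def connected_component_def by auto
  with tdisc quasi have "quasi_component_of_set euclidean x = {x}" by auto
  then have "{x} \<in> quasi_components_of euclidean"
    unfolding quasi_components_of_def by (metis UNIV_I image_eqI topspace_euclidean)
  moreover have "compactin euclidean (- N)"
    using closed_Int_compact[of "- N" UNIV] cpt N by auto
  ultimately have "separated_between euclidean {x} (- N)"
    using separated_between_quasi_component_compact N by fastforce
  then obtain U V where UV: "open U" "open V" "U \<union> V = UNIV" "disjnt U V" "x \<in> U" "- N \<subseteq> V"
    unfolding separated_between_def by auto
  then have "U = - V" by (auto simp: disjnt_def)
  then show ?thesis using UV by (auto simp: disjnt_def)
qed

text \<open>Taylor coefficients of \<open>(1 - y) powr (-1/2)\<close>. They are bounded by 1 and their
  Cauchy square is the constant sequence 1 (Vandermonde), i.e. the series squares to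
  \<open>1/(1 - y)\<close>.\<close>

definition invsqrt_coeff :: "nat \<Rightarrow> real"
  where "invsqrt_coeff n = (-1)^n * ((-1/2::real) gchoose n)"

lemma invsqrt_coeff_Suc:
  "invsqrt_coeff (Suc n) = invsqrt_coeff n * ((real n + 1/2) / (real n + 1))"
proof -
  have nz: "real n + 1 \<noteq> 0" by linarith
  have "(real n + 1) * ((-1/2::real) gchoose (Suc n)) = (-1/2 - real n) * ((-1/2) gchoose n)"
    using gbinomial_mult_1[of "-1/2::real" n] by (simp add: algebra_simps)
  with nz have e: "((-1/2::real) gchoose (Suc n)) = (-1/2 - real n) / (real n + 1) * ((-1/2) gchoose n)"
    by (simp add: field_simps)
  show ?thesis unfolding invsqrt_coeff_def e using nz by (simp add: field_simps)
qed

lemma invsqrt_coeff_bound: "\<bar>invsqrt_coeff n\<bar> \<le> 1"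
proof (induction n)
  case 0
  then show ?case by (simp add: invsqrt_coeff_def)
next
  case (Suc n)
  have "\<bar>(real n + 1/2) / (real n + 1)\<bar> \<le> 1" by (simp add: field_simps)
  then have "\<bar>invsqrt_coeff n\<bar> * \<bar>(real n + 1/2) / (real n + 1)\<bar> \<le> 1 * 1"
    using Suc by (intro mult_mono) auto
  then show ?case by (simp add: invsqrt_coeff_Suc abs_mult)
qed

lemma invsqrt_coeff_square: "(\<Sum>k\<le>n. invsqrt_coeff k * invsqrt_coeff (n - k)) = 1"
proof -
  have "(\<Sum>k\<le>n. invsqrt_coeff k * invsqrt_coeff (n - k))
      = (-1)^n * (\<Sum>k\<le>n. ((-1/2::real) gchoose k) * ((-1/2) gchoose (n - k)))"
    unfolding sum_distrib_left
  proof (rule sum.cong)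
    fix k assume "k \<in> {..n}"
    then have "(-1::real)^k * (-1)^(n-k) = (-1)^n" by (simp add: power_add[symmetric])
    then show "invsqrt_coeff k * invsqrt_coeff (n - k)
        = (-1)^n * (((-1/2::real) gchoose k) * ((-1/2) gchoose (n - k)))"
      unfolding invsqrt_coeff_def by (metis (no_types, lifting) mult.assoc mult.left_commute)
  qed simp
  also have "\<dots> = (-1)^n * ((-1::real) gchoose n)"
    using gbinomial_Vandermonde[of "-1/2::real" "-1/2" n] by (simp add: atLeast0AtMost)
  also have "((-1::real) gchoose n) = (-1)^n"
    using gbinomial_minus[of "1::real" n] binomial_gbinomial[of n n, where 'a=real] by simp
  finally show ?thesis by (simp add: power_mult_distrib[symmetric])
qed

lemma geometric_telescope_sums:
  fixes y :: "'a::real_normed_algebra_1"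
  assumes "norm y < 1"
  shows "(\<lambda>k. y ^ k * (1 - y)) sums 1"
proof -
  have "(\<lambda>n. y ^ n) \<longlonglongrightarrow> 0"
    using assms by (intro LIMSEQ_power_zero) simp
  then have "(\<lambda>n. (- (y ^ Suc n)) - (- (y ^ n))) sums (0 - (- (y ^ 0)))"
    by (intro telescope_sums) (use tendsto_minus in fastforce)
  moreover have "(\<lambda>n. (- (y ^ Suc n)) - (- (y ^ n))) = (\<lambda>k. y ^ k * (1 - y))"
    by (auto simp: algebra_simps power_commutes)
  ultimately show ?thesis by simp
qed

lemma invsqrt_series:
  fixes y :: "'a::{real_normed_algebra_1,banach}"
  assumes ny: "norm y \<le> 1/2"
  defines "r \<equiv> (\<Sum>n. invsqrt_coeff n *\<^sub>R y ^ n)"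
  shows "summable (\<lambda>n. invsqrt_coeff n *\<^sub>R y ^ n)" "r * r * (1 - y) = 1" "norm r \<le> 2"
    "\<And>p. p * y = y * p \<Longrightarrow> p * r = r * p"
proof -
  have ny1: "norm y < 1" using ny by simp
  have bnd: "norm (invsqrt_coeff n *\<^sub>R y ^ n) \<le> norm y ^ n" for n
  proof -
    have "\<bar>invsqrt_coeff n\<bar> * norm (y ^ n) \<le> 1 * norm y ^ n"
      using invsqrt_coeff_bound[of n] norm_power_ineq[of y n] by (intro mult_mono) auto
    then show ?thesis by simp
  qed
  have sg: "summable (\<lambda>n. norm y ^ n)" using ny1 by (intro summable_geometric) simp
  have sn: "summable (\<lambda>n. norm (invsqrt_coeff n *\<^sub>R y ^ n))"
    by (rule summable_comparison_test[OF _ sg]) (use bnd in auto)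
  then show sm: "summable (\<lambda>n. invsqrt_coeff n *\<^sub>R y ^ n)" by (rule summable_norm_cancel)
  have "norm r \<le> (\<Sum>n. norm (invsqrt_coeff n *\<^sub>R y ^ n))" unfolding r_def by (rule summable_norm[OF sn])
  also have "\<dots> \<le> (\<Sum>n. norm y ^ n)" by (rule suminf_le[OF bnd sn sg])
  also have "\<dots> = 1 / (1 - norm y)" using ny1 by (intro suminf_geometric) simp
  also have "\<dots> \<le> 2" using ny by (simp add: field_simps)
  finally show "norm r \<le> 2" .
  have "(\<Sum>i\<le>k. (invsqrt_coeff i *\<^sub>R y ^ i) * (invsqrt_coeff (k - i) *\<^sub>R y ^ (k - i))) = y ^ k" for k
  proof -
    have "(\<Sum>i\<le>k. (invsqrt_coeff i *\<^sub>R y ^ i) * (invsqrt_coeff (k - i) *\<^sub>R y ^ (k - i)))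
        = (\<Sum>i\<le>k. invsqrt_coeff i * invsqrt_coeff (k - i)) *\<^sub>R y ^ k"
      unfolding scaleR_sum_left by (rule sum.cong) (auto simp: power_add[symmetric])
    then show ?thesis by (simp add: invsqrt_coeff_square)
  qed
  with Cauchy_product_sums[OF sn sn] have "(\<lambda>k. y ^ k) sums (r * r)"
    unfolding r_def by simp
  then have "(\<lambda>k. y ^ k * (1 - y)) sums (r * r * (1 - y))" by (rule sums_mult2)
  with geometric_telescope_sums[OF ny1] show "r * r * (1 - y) = 1" using sums_unique2 by blast
  fix p assume py: "p * y = y * p"
  have "p * r = (\<Sum>n. p * (invsqrt_coeff n *\<^sub>R y ^ n))"
    unfolding r_def by (rule suminf_mult[OF sm, symmetric])
  also have "\<dots> = (\<Sum>n. (invsqrt_coeff n *\<^sub>R y ^ n) * p)"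
    using power_commuting_commutes[OF py[symmetric]] by simp
  also have "\<dots> = r * p" unfolding r_def by (rule suminf_mult2[OF sm, symmetric])
  finally show "p * r = r * p" .
qed

locale cstar =
  fixes sc :: "complex \<Rightarrow> 'a::{real_normed_algebra_1,banach} \<Rightarrow> 'a" and st :: "'a \<Rightarrow> 'a"
  assumes cstar: "cstar_algebra sc st"
begin

lemma sc_real: "sc (complex_of_real r) a = r *\<^sub>R a" using cstar by (simp add: cstar_algebra_def)
lemma sc_norm: "norm (sc c a) = cmod c * norm a" using cstar by (simp add: cstar_algebra_def)
lemma st_st [simp]: "st (st a) = a" using cstar by (simp add: cstar_algebra_def)
lemma st_add: "st (a + b) = st a + st b" using cstar by (simp add: cstar_algebra_def)
lemma st_sc: "st (sc c a) = sc (cnj c) (st a)" using cstar by (simp add: cstar_algebra_def)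
lemma st_mult: "st (a * b) = st b * st a" using cstar by (simp add: cstar_algebra_def)
lemma cstar_identity: "norm (st a * a) = norm a ^ 2" using cstar by (simp add: cstar_algebra_def)

lemma st_zero [simp]: "st 0 = 0"
  using st_add[of 0 0] by simp

lemma st_minus: "st (- a) = - st a"
  using st_add[of a "- a"] minus_unique[of "st a" "st (- a)"] by simp

lemma st_diff: "st (a - b) = st a - st b"
  using st_add[of a "- b"] st_minus[of b] by simp

lemma st_one [simp]: "st 1 = 1"
  using st_mult[of "st 1" 1] by simp

lemma st_scaleR: "st (r *\<^sub>R a) = r *\<^sub>R st a"
  using st_sc[of "complex_of_real r" a] by (simp add: sc_real)

lemma st_power: "st (y ^ n) = st y ^ n"
  by (induction n) (simp_all add: st_mult power_commutes)

text \<open>The involution is isometric; this follows from the C*-identity alone.\<close>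

lemma norm_st [simp]: "norm (st a) = norm a"
proof -
  have le: "norm b \<le> norm (st b)" for b
  proof (cases "b = 0")
    case False
    have "norm b ^ 2 \<le> norm (st b) * norm b"
      using cstar_identity[of b] norm_mult_ineq[of "st b" b] by simp
    then show ?thesis using False by (simp add: power2_eq_square)
  qed simp
  show ?thesis using le[of a] le[of "st a"] by simp
qed

lemma bounded_linear_st: "bounded_linear st"
  by (rule bounded_linear_intro[where K=1]) (simp_all add: st_add st_scaleR)

lemma norm_projection: assumes "st p = p" "p * p = p" shows "norm p \<le> 1"
proof -
  have "norm p ^ 2 = norm p" using cstar_identity[of p] assms by simp
  then have "norm p * (norm p - 1) = 0" by (simp add: power2_eq_square algebra_simps)
  then show ?thesis by auto
qed

lemma norm_isometry: assumes "st u * u = 1" shows "norm u = 1"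
proof -
  have "norm u ^ 2 = 1" using cstar_identity[of u] assms by simp
  then show ?thesis using norm_ge_zero[of u] by (auto simp add: power2_eq_1_iff)
qed

lemma invsqrt:
  assumes "st y = y" "norm y \<le> 1/2"
  obtains r where "st r = r" "r * (1 - y) * r = 1" "norm r \<le> 2"
    "\<And>p. p * y = y * p \<Longrightarrow> p * r = r * p"
proof -
  define r where "r = (\<Sum>n. invsqrt_coeff n *\<^sub>R y ^ n)"
  note R = invsqrt_series[OF assms(2), folded r_def]
  have "st r = (\<Sum>n. st (invsqrt_coeff n *\<^sub>R y ^ n))"
    unfolding r_def by (rule bounded_linear.suminf[OF bounded_linear_st R(1)])
  also have "\<dots> = r" unfolding r_def by (simp only: st_scaleR st_power assms(1))
  finally have "st r = r" .
  moreover have "r * (1 - y) * r = 1"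
  proof -
    have "y * r = r * y" using R(4)[of y] by simp
    then have "r * (1 - y) * r = r * r * (1 - y)" by (simp add: algebra_simps)
    then show ?thesis using R(2) by simp
  qed
  ultimately show ?thesis using that R(3,4) by blast
qed

text \<open>Proper infiniteness of the corner \<open>pAp\<close> cut down by a central projection p: two
  isometries of the corner (\<open>b\<^sup>* b = p\<close>, range under p) with orthogonal ranges.\<close>

definition central_projection :: "'a \<Rightarrow> bool"
  where "central_projection p \<longleftrightarrow> st p = p \<and> p * p = p \<and> (\<forall>a. p * a = a * p)"

definition corner_isometry :: "'a \<Rightarrow> 'a \<Rightarrow> bool"
  where "corner_isometry p b \<longleftrightarrow> p * b = b \<and> st b * b = p"

definition corner_properly_infinite :: "'a \<Rightarrow> bool"
  where "corner_properly_infinite p \<longleftrightarrow>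
    (\<exists>b1 b2. corner_isometry p b1 \<and> corner_isometry p b2 \<and> st b1 * b2 = 0)"

text \<open>For \<open>p = 1\<close> this is proper infiniteness of A: take the range projections \<open>b\<^sub>i b\<^sub>i\<^sup>*\<close>.\<close>

lemma properly_infinite_if_corner_one:
  assumes "corner_properly_infinite 1"
  shows "properly_infinite st 1"
proof -
  obtain b1 b2 where B: "st b1 * b1 = 1" "st b2 * b2 = 1" "st b1 * b2 = 0"
    using assms unfolding corner_properly_infinite_def corner_isometry_def by blast
  have range_proj: "b * st b * (b * st b) = b * st b" "st (b * st b) = b * st b" if "st b * b = 1" for b
    using that by (simp_all add: st_mult mult.assoc[symmetric]) (simp add: mult.assoc)
  have "b1 * st b1 * (b2 * st b2) = b1 * (st b1 * b2) * st b2" by (simp only: mult.assoc)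
  then have orth: "b1 * st b1 * (b2 * st b2) = 0" using B(3) by simp
  show ?thesis unfolding properly_infinite_def
    by (rule exI[of _ "b1 * st b1"], rule exI[of _ "b2 * st b2"], rule exI[of _ b1], rule exI[of _ b2])
      (use range_proj[OF B(1)] range_proj[OF B(2)] B(1,2) orth in simp)
qed

lemma central_projectionD:
  assumes "central_projection p"
  shows "st p = p" "p * p = p" "p * a = a * p" "a * (p * b) = p * (a * b)" "p * (p * b) = p * b"
proof -
  have sp: "st p = p" and pp: "p * p = p" and comm: "\<And>a. p * a = a * p"
    using assms unfolding central_projection_def by blast+
  have "a * (p * b) = (a * p) * b" by (simp only: mult.assoc)
  also have "\<dots> = (p * a) * b" by (simp only: comm[of a])
  also have "\<dots> = p * (a * b)" by (simp only: mult.assoc)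
  finally show "a * (p * b) = p * (a * b)" .
  show "p * (p * b) = p * b" by (simp only: pp mult.assoc[symmetric])
  show "st p = p" "p * p = p" "p * a = a * p" by (fact sp, fact pp, fact comm)
qed

text \<open>An element that is an isometry up to \<open>1/2\<close> on the corner of p can be corrected to a
  corner isometry \<open>p v r\<close>, with \<open>r = (p v\<^sup>* v)^{-1/2}\<close> of norm at most 2.\<close>

lemma normalize_near_isometry:
  assumes p: "central_projection p" and nv: "norm (p * (st v * v - 1)) \<le> 1/2"
  obtains r where "st r = r" "norm r \<le> 2" "corner_isometry p (p * v * r)"
proof -
  note P = central_projectionD[OF p]
  define y where "y = p * (1 - st v * v)"
  have sy: "st y = y" unfolding y_def by (simp add: st_mult st_diff P(1) P(3)[of "1 - st v * v"])
  have "y = - (p * (st v * v - 1))" unfolding y_def by (simp add: algebra_simps)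
  then have "norm y \<le> 1/2" using nv by simp
  then obtain r where r: "st r = r" "r * (1 - y) * r = 1" "norm r \<le> 2"
      "\<And>q. q * y = y * q \<Longrightarrow> q * r = r * q"
    using invsqrt sy by blast
  have pr: "p * r = r * p" using r(4)[of p] P(3)[of y] by simp
  have "p * (1 - y) = p * (st v * v)" unfolding y_def by (simp add: algebra_simps P(2) P(5))
  then have "st (p * v * r) * (p * v * r) = r * (p * (1 - y)) * r"
    by (simp add: st_mult P(1,5) P(4)[of "st v"] r(1) mult.assoc)
  also have "\<dots> = p * (r * (1 - y) * r)" using pr by (simp add: mult.assoc[symmetric])
  finally have "st (p * v * r) * (p * v * r) = p" using r(2) by simp
  moreover have "p * (p * v * r) = p * v * r" using P(2) by (simp add: mult.assoc[symmetric])
  ultimately show ?thesis using that r(1,3) unfolding corner_isometry_def by blast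
qed

text \<open>Given two corner isometries with almost orthogonal ranges, the second can be replaced by
  one whose range is exactly orthogonal to the first: project \<open>b\<^sub>2\<close> onto \<open>p - b\<^sub>1 b\<^sub>1\<^sup>*\<close> and
  renormalize.\<close>

lemma orthogonalize_isometry:
  assumes p: "central_projection p" and b1: "corner_isometry p b1" and b2: "corner_isometry p b2"
    and nq: "norm (st b1 * b2) \<le> 1/2"
  obtains b3 where "corner_isometry p b3" "st b1 * b3 = 0"
proof -
  note P = central_projectionD[OF p]
  have B1: "p * b1 = b1" "st b1 * b1 = p" and B2: "p * b2 = b2" "st b2 * b2 = p"
    using b1 b2 unfolding corner_isometry_def by auto
  have b1p: "b1 * p = b1" using P(3)[of b1] B1(1) by simp
  have "st b1 * p = st (p * b1)" by (simp add: st_mult P(1))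
  then have sb1p: "st b1 * p = st b1" using B1(1) by simp
  have psb1: "p * st b1 = st b1" using P(3)[of "st b1"] sb1p by simp
  define B where "B = b1 * st b1"
  define E where "E = p - B"
  have pB: "p * B = B" unfolding B_def using B1(1) by (simp add: mult.assoc[symmetric])
  have Bp: "B * p = B" unfolding B_def using sb1p by (simp add: mult.assoc)
  have "B * B = b1 * (st b1 * b1) * st b1" unfolding B_def by (simp only: mult.assoc)
  then have BB: "B * B = B" unfolding B_def using B1(2) b1p by simp
  have sb1B: "st b1 * B = st b1" unfolding B_def using B1(2) psb1 by (simp add: mult.assoc[symmetric])
  have sE: "st E = E" unfolding E_def B_def by (simp add: st_diff st_mult P(1))
  have EE: "E * E = E" and pE: "p * E = E" and sb1E: "st b1 * E = 0"
    unfolding E_def using P(2) pB Bp BB sb1p sb1B by (simp_all add: algebra_simps)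
  define q where "q = st b1 * b2"
  define y where "y = st q * q"
  have sy: "st y = y" unfolding y_def by (simp add: st_mult)
  have "norm y \<le> norm q * norm q" unfolding y_def using norm_mult_ineq[of "st q" q] by simp
  also have "\<dots> \<le> (1/2) * (1/2)" using nq unfolding q_def by (intro mult_mono) auto
  finally have ny: "norm y \<le> 1/2" by simp
  have pq: "p * q = q" unfolding q_def using sb1p P(3)[of "st b1"] by (simp add: mult.assoc[symmetric])
  have "y = st q * (p * q)" unfolding y_def by (simp only: pq)
  also have "\<dots> = p * y" unfolding y_def by (rule P(4))
  finally have py: "p * y = y" by (rule sym)
  have "st (E * b2) * (E * b2) = st b2 * (E * E) * b2" by (simp add: st_mult sE mult.assoc)
  also have "\<dots> = st b2 * (p * b2) - (st b2 * b1) * (st b1 * b2)"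
    unfolding EE unfolding E_def B_def by (simp add: algebra_simps)
  also have "\<dots> = p * (1 - y)"
    using B2 py unfolding y_def q_def by (simp add: st_mult algebra_simps)
  finally have tt: "st (E * b2) * (E * b2) = p * (1 - y)" .
  obtain r where r: "st r = r" "r * (1 - y) * r = 1" "\<And>z. z * y = y * z \<Longrightarrow> z * r = r * z"
    using invsqrt[OF sy ny] by blast
  have pr: "p * r = r * p" using r(3)[of p] P(3)[of y] by simp
  have "st (E * b2 * r) * (E * b2 * r) = r * (p * (1 - y)) * r"
    by (simp add: st_mult r(1) tt[symmetric] mult.assoc)
  also have "\<dots> = p * (r * (1 - y) * r)" using pr by (simp add: mult.assoc[symmetric])
  finally have "st (E * b2 * r) * (E * b2 * r) = p" using r(2) by simp
  moreover have "p * (E * b2 * r) = E * b2 * r" using pE by (simp add: mult.assoc[symmetric])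
  moreover have "st b1 * (E * b2 * r) = 0" using sb1E by (simp add: mult.assoc[symmetric])
  ultimately show ?thesis using that unfolding corner_isometry_def by blast
qed

lemma corner_properly_infinite_if_approx:
  assumes p: "central_projection p"
    and nv: "norm (p * (st v * v - 1)) \<le> 1/100" and nw: "norm (p * (st w * w - 1)) \<le> 1/100"
    and nvw: "norm (p * (st v * w)) \<le> 1/100"
  shows "corner_properly_infinite p"
proof -
  note P = central_projectionD[OF p]
  obtain r1 where r1: "st r1 = r1" "norm r1 \<le> 2" "corner_isometry p (p * v * r1)"
    using normalize_near_isometry[OF p, of v] nv by auto
  obtain r2 where r2: "norm r2 \<le> 2" "corner_isometry p (p * w * r2)"
    using normalize_near_isometry[OF p, of w] nw by auto
  have "st (p * v * r1) * (p * w * r2) = r1 * (st v * (p * p) * w) * r2"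
    by (simp add: st_mult P(1) r1(1) mult.assoc)
  also have "st v * (p * p) * w = p * (st v * w)"
    using P(4)[of "st v" w] by (simp add: P(2) mult.assoc)
  finally have "st (p * v * r1) * (p * w * r2) = r1 * (p * (st v * w)) * r2" .
  then have "norm (st (p * v * r1) * (p * w * r2)) \<le> norm (r1 * (p * (st v * w))) * norm r2"
    by (simp add: norm_mult_ineq)
  also have "\<dots> \<le> norm r1 * norm (p * (st v * w)) * norm r2"
    by (intro mult_right_mono norm_mult_ineq) simp
  also have "\<dots> \<le> 2 * (1/100) * 2"
    using r1(2) r2(1) nvw by (intro mult_mono) auto
  finally have "norm (st (p * v * r1) * (p * w * r2)) \<le> 1/2" by simp
  then obtain b3 where "corner_isometry p b3" "st (p * v * r1) * b3 = 0"
    using orthogonalize_isometry[OF p r1(3) r2(2)] by blast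
  then show ?thesis unfolding corner_properly_infinite_def using r1(3) by blast
qed

lemma corner_properly_infinite_zero: "corner_properly_infinite 0"
  unfolding corner_properly_infinite_def corner_isometry_def by (intro exI[of _ 0]) simp

lemma corner_properly_infinite_sub:
  assumes q: "central_projection q" and qp: "q * p = q" and pi: "corner_properly_infinite p"
  shows "corner_properly_infinite q"
proof -
  note Q = central_projectionD[OF q]
  obtain x1 x2 where X: "st x1 * x1 = p" "st x2 * x2 = p" "st x1 * x2 = 0"
    using pi unfolding corner_properly_infinite_def corner_isometry_def by blast
  have cut: "st (q * x) * (q * y) = q * (st x * y)" for x y
  proof -
    have "st (q * x) * (q * y) = st x * (q * q) * y" by (simp add: st_mult Q(1) mult.assoc)
    also have "\<dots> = q * (st x * y)" using Q(4)[of "st x" y] by (simp add: Q(2) mult.assoc)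
    finally show ?thesis .
  qed
  have "corner_isometry q (q * x1)" "corner_isometry q (q * x2)"
    unfolding corner_isometry_def using cut X qp Q(5) by simp_all
  moreover have "st (q * x1) * (q * x2) = 0" using cut X(3) by simp
  ultimately show ?thesis unfolding corner_properly_infinite_def by blast
qed

lemma orthogonal_corners:
  assumes "st p = p" "p * q = 0" "p * x = x" "q * y = y"
  shows "p * y = 0" "st x * y = 0"
proof -
  have "p * y = p * q * y" using assms(4) by (simp add: mult.assoc)
  then show py: "p * y = 0" using assms(2) by simp
  have "st x * y = st (p * x) * y" using assms(3) by simp
  also have "\<dots> = st x * (p * y)" using assms(1) by (simp add: st_mult mult.assoc)
  finally show "st x * y = 0" using py by simp
qed

lemma corner_properly_infinite_add:
  assumes p: "central_projection p" and q: "central_projection q" and pq: "p * q = 0"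
    and pi_p: "corner_properly_infinite p" and pi_q: "corner_properly_infinite q"
  shows "corner_properly_infinite (p + q)"
proof -
  obtain x1 x2 where X: "p * x1 = x1" "p * x2 = x2" "st x1 * x1 = p" "st x2 * x2 = p" "st x1 * x2 = 0"
    using pi_p unfolding corner_properly_infinite_def corner_isometry_def by blast
  obtain y1 y2 where Y: "q * y1 = y1" "q * y2 = y2" "st y1 * y1 = q" "st y2 * y2 = q" "st y1 * y2 = 0"
    using pi_q unfolding corner_properly_infinite_def corner_isometry_def by blast
  have qp: "q * p = 0" using pq central_projectionD(3)[OF p, of q] by simp
  note o1 = orthogonal_corners[OF central_projectionD(1)[OF p] pq]
  note o2 = orthogonal_corners[OF central_projectionD(1)[OF q] qp]
  have "corner_isometry (p + q) (x1 + y1)" "corner_isometry (p + q) (x2 + y2)"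
    unfolding corner_isometry_def
    using X Y o1[OF X(1) Y(1)] o1[OF X(2) Y(2)] o2[OF Y(1) X(1)] o2[OF Y(2) X(2)]
    by (simp_all add: algebra_simps st_add)
  moreover have "st (x1 + y1) * (x2 + y2) = 0"
    using X(5) Y(5) o1(2)[OF X(1) Y(2)] o2(2)[OF Y(1) X(2)] by (simp add: algebra_simps st_add)
  ultimately show ?thesis unfolding corner_properly_infinite_def by blast
qed

end

locale cx_alg = cstar sc st
  for sc :: "complex \<Rightarrow> 'a::{real_normed_algebra_1,banach} \<Rightarrow> 'a" and st :: "'a \<Rightarrow> 'a" +
  fixes \<phi> :: "('x::topological_space \<Rightarrow> complex) \<Rightarrow> 'a"
  assumes cx: "cx_algebra sc st \<phi>"
begin

lemma phi_one: "\<phi> (\<lambda>_. 1) = 1"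
  using cx unfolding cx_algebra_def by blast

lemma phi_add: "continuous_on UNIV f \<Longrightarrow> continuous_on UNIV g \<Longrightarrow> \<phi> (\<lambda>t. f t + g t) = \<phi> f + \<phi> g"
  using cx unfolding cx_algebra_def by blast

lemma phi_mult: "continuous_on UNIV f \<Longrightarrow> continuous_on UNIV g \<Longrightarrow> \<phi> (\<lambda>t. f t * g t) = \<phi> f * \<phi> g"
  using cx unfolding cx_algebra_def by blast

lemma phi_sc: "continuous_on UNIV f \<Longrightarrow> \<phi> (\<lambda>t. c * f t) = sc c (\<phi> f)"
  using cx unfolding cx_algebra_def by blast

lemma phi_cnj: "continuous_on UNIV f \<Longrightarrow> \<phi> (\<lambda>t. cnj (f t)) = st (\<phi> f)"
  using cx unfolding cx_algebra_def by blast

lemma phi_central: "continuous_on UNIV f \<Longrightarrow> \<phi> f * a = a * \<phi> f"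
  using cx unfolding cx_algebra_def by blast

lemma phi_zero: "\<phi> (\<lambda>_. 0) = 0"
  using phi_add[of "\<lambda>_. 0" "\<lambda>_. 0"] by simp

text \<open>A real function with values in \<open>[-1, 1]\<close> is the real part of the unitary
  \<open>u + i\<surd>(1 - u\<^sup>2)\<close>, so its image under \<open>\<phi>\<close> has norm at most 1.\<close>

lemma phi_real_bound:
  fixes u :: "'x \<Rightarrow> real"
  assumes cu: "continuous_on UNIV u" and bu: "\<And>t. \<bar>u t\<bar> \<le> 1"
  shows "norm (\<phi> (\<lambda>t. complex_of_real (u t))) \<le> 1"
proof -
  define w where "w t = complex_of_real (u t) + \<i> * complex_of_real (sqrt (1 - (u t)\<^sup>2))" for t
  have cw: "continuous_on UNIV w" unfolding w_def by (intro continuous_intros cu)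
  have cw': "continuous_on UNIV (\<lambda>t. cnj (w t))" by (intro continuous_intros cw)
  have "cnj (w t) * w t = 1" for t
  proof -
    have "(u t)\<^sup>2 \<le> 1" using abs_le_square_iff[of "u t" 1] bu[of t] by simp
    then show ?thesis unfolding w_def by (simp add: complex_eq_iff power2_eq_square)
  qed
  then have "st (\<phi> w) * \<phi> w = 1"
    using phi_cnj[OF cw] phi_mult[OF cw' cw] phi_one by simp
  then have nw: "norm (\<phi> w) = 1" by (rule norm_isometry)
  have uw: "(\<lambda>t. complex_of_real (u t)) = (\<lambda>t. (1/2) * (w t + cnj (w t)))"
    by (rule ext) (simp add: w_def complex_eq_iff)
  have "\<phi> (\<lambda>t. complex_of_real (u t)) = sc (1/2) (\<phi> w + st (\<phi> w))"
    unfolding uw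
    by (subst phi_sc) (auto intro!: continuous_intros cw simp: phi_add[OF cw cw'] phi_cnj[OF cw])
  then have "norm (\<phi> (\<lambda>t. complex_of_real (u t))) = 1/2 * norm (\<phi> w + st (\<phi> w))"
    by (simp add: sc_norm)
  also have "\<dots> \<le> 1/2 * (norm (\<phi> w) + norm (st (\<phi> w)))"
    by (intro mult_left_mono norm_triangle_ineq) auto
  finally show ?thesis using nw by simp
qed

text \<open>Splitting into real and imaginary parts: \<open>\<phi>\<close> is bounded (with constant 2) on C(X).\<close>

lemma phi_bound:
  assumes ch: "continuous_on UNIV h" and bh: "\<And>t. norm (h t) \<le> M" and M: "M > 0"
  shows "norm (\<phi> h) \<le> 2 * M"
proof -
  define u1 where "u1 t = Re (h t) / M" for t
  define u2 where "u2 t = Im (h t) / M" for t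
  have c1: "continuous_on UNIV u1" unfolding u1_def by (intro continuous_intros ch) (use M in auto)
  have c2: "continuous_on UNIV u2" unfolding u2_def by (intro continuous_intros ch) (use M in auto)
  have b1: "\<bar>u1 t\<bar> \<le> 1" for t
    using abs_Re_le_cmod[of "h t"] bh[of t] M unfolding u1_def by (simp add: divide_le_eq_1)
  have b2: "\<bar>u2 t\<bar> \<le> 1" for t
    using abs_Im_le_cmod[of "h t"] bh[of t] M unfolding u2_def by (simp add: divide_le_eq_1)
  have cc1: "continuous_on UNIV (\<lambda>t. complex_of_real (u1 t))" by (intro continuous_intros c1)
  have cc2: "continuous_on UNIV (\<lambda>t. complex_of_real (u2 t))" by (intro continuous_intros c2)
  have cc2': "continuous_on UNIV (\<lambda>t. \<i> * complex_of_real (u2 t))" by (intro continuous_intros c2)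
  have hh: "h = (\<lambda>t. complex_of_real M * (complex_of_real (u1 t) + \<i> * complex_of_real (u2 t)))"
    by (rule ext) (use M in \<open>simp add: u1_def u2_def complex_eq_iff\<close>)
  have "\<phi> h = sc (complex_of_real M)
      (\<phi> (\<lambda>t. complex_of_real (u1 t)) + sc \<i> (\<phi> (\<lambda>t. complex_of_real (u2 t))))"
    unfolding hh
    by (subst phi_sc) (auto intro!: continuous_intros c1 c2 simp: phi_add[OF cc1 cc2'] phi_sc[OF cc2])
  then have "norm (\<phi> h) = M * norm (\<phi> (\<lambda>t. complex_of_real (u1 t))
      + sc \<i> (\<phi> (\<lambda>t. complex_of_real (u2 t))))"
    using M by (simp add: sc_norm)
  also have "\<dots> \<le> M * (norm (\<phi> (\<lambda>t. complex_of_real (u1 t)))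
      + norm (sc \<i> (\<phi> (\<lambda>t. complex_of_real (u2 t)))))"
    using M by (intro mult_left_mono norm_triangle_ineq) auto
  also have "\<dots> \<le> M * (1 + 1)"
    using phi_real_bound[OF c1 b1] phi_real_bound[OF c2 b2] M
    by (intro mult_left_mono add_mono) (auto simp: sc_norm)
  finally show ?thesis by simp
qed

end

lemma continuous_on_indicator_clopen:
  assumes "clopen U"
  shows "continuous_on UNIV (indicator U :: 'x::topological_space \<Rightarrow> complex)"
proof -
  have "continuous_on (U \<union> - U) (\<lambda>t. if t \<in> U then (1::complex) else 0)"
    using assms by (intro continuous_on_cases) (auto intro: continuous_on_const)
  moreover have "indicator U = (\<lambda>t. if t \<in> U then (1::complex) else 0)"
    by (rule ext) (simp split: split_indicator)
  ultimately show ?thesis by (simp add: Compl_partition)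
qed

context cx_alg
begin

abbreviation proj :: "'x set \<Rightarrow> 'a"
  where "proj U \<equiv> \<phi> (indicator U)"

lemma proj_central_projection:
  assumes "clopen U"
  shows "central_projection (proj U)"
proof -
  note c = continuous_on_indicator_clopen[OF assms]
  have "cnj (indicator U t) = (indicator U t :: complex)" for t
    by (simp split: split_indicator)
  then have "st (proj U) = proj U" by (simp only: phi_cnj[OF c, symmetric])
  moreover have "indicator U t * indicator U t = (indicator U t :: complex)" for t
    by (simp split: split_indicator)
  then have "proj U * proj U = proj U" by (simp only: phi_mult[OF c c, symmetric])
  ultimately show ?thesis unfolding central_projection_def using phi_central[OF c] by blast
qed

lemma proj_Int:
  assumes "clopen U" "clopen V"
  shows "proj (U \<inter> V) = proj U * proj V"
  using phi_mult[OF continuous_on_indicator_clopen[OF assms(1)] continuous_on_indicator_clopen[OF assms(2)]]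
  by (simp add: indicator_inter_arith[abs_def])

lemma proj_disjoint_Un:
  assumes "clopen U" "clopen V" "U \<inter> V = {}"
  shows "proj (U \<union> V) = proj U + proj V"
proof -
  have "indicator (U \<union> V) = (\<lambda>t. indicator U t + indicator V t :: complex)"
    by (rule ext) (use assms(3) in \<open>auto split: split_indicator\<close>)
  then show ?thesis
    using phi_add[OF continuous_on_indicator_clopen[OF assms(1)] continuous_on_indicator_clopen[OF assms(2)]]
    by simp
qed

lemma proj_empty: "proj {} = 0"
  using phi_zero by (simp add: indicator_def[abs_def])

lemma proj_UNIV: "proj UNIV = 1"
  using phi_one by (simp add: indicator_def[abs_def])

text \<open>Corner proper infiniteness passes to unions of clopen sets: split \<open>U \<union> V\<close> into the
  disjoint pieces U and \<open>V - U\<close>, cut \<open>p\<^sub>V\<close> down to \<open>p\<^bsub>V-U\<^esub>\<close> and add.\<close>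

lemma corner_properly_infinite_Un:
  assumes U: "clopen U" and V: "clopen V"
    and pi_U: "corner_properly_infinite (proj U)" and pi_V: "corner_properly_infinite (proj V)"
  shows "corner_properly_infinite (proj (U \<union> V))"
proof -
  have D: "clopen (V - U)" using U V by (auto intro: open_Diff closed_Diff)
  have VU: "(V - U) \<inter> V = V - U" and UD: "U \<inter> (V - U) = {}" and UV: "U \<union> V = U \<union> (V - U)"
    by blast+
  have "proj (V - U) = proj (V - U) * proj V" using proj_Int[OF D V, unfolded VU] .
  then have "corner_properly_infinite (proj (V - U))"
    using corner_properly_infinite_sub[OF proj_central_projection[OF D] _ pi_V] by simp
  moreover have "proj U * proj (V - U) = 0"
    using proj_Int[OF U D, unfolded UD] proj_empty by simp
  ultimately have "corner_properly_infinite (proj U + proj (V - U))"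
    by (intro corner_properly_infinite_add proj_central_projection U D pi_U)
  then show ?thesis unfolding UV proj_disjoint_Un[OF U D UD] .
qed

lemma corner_properly_infinite_Union:
  assumes "finite F" "\<forall>U\<in>F. clopen U \<and> corner_properly_infinite (proj U)"
  shows "corner_properly_infinite (proj (\<Union>F))"
  using assms
proof (induction F rule: finite_induct)
  case empty
  show ?case by (simp add: phi_zero corner_properly_infinite_zero)
next
  case (insert U F)
  then show ?case by (auto intro!: corner_properly_infinite_Un)
qed

end

lemma sum_lessThan_add_split:
  fixes f :: "nat \<Rightarrow> 'b::comm_monoid_add"
  shows "(\<Sum>i<m + n. f i) = (\<Sum>i<m. f i) + (\<Sum>i<n. f (m + i))"
  by (induction n) (simp_all add: add.assoc)

lemma closure_invariant:
  assumes "continuous_on UNIV f" "\<And>s. s \<in> S \<Longrightarrow> f s \<in> closure S" "z \<in> closure S"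
  shows "f z \<in> closure S"
  using image_closure_subset[of S f "closure S"] assms continuous_on_subset by blast

text \<open>Two ring identities behind the computation \<open>v\<^sup>* w = v\<^sup>* (v v\<^sup>*)(w w\<^sup>*) w\<close> below.\<close>

lemma telescope_left: "((vs::'a::ring_1) - e) * ws + e * (ws - f) + e * f = vs * ws"
  by (simp add: algebra_simps)

lemma telescope_right: "(a::'a::ring_1) * x * b - (a - 1) * (x * b) - x * (b - 1) = x"
  by (simp add: algebra_simps)

context cx_alg
begin

text \<open>The fibre ideal \<open>C\<^sub>0(X - {x}) A\<close> is the closure of the finite sums \<open>\<Sum> \<phi>(g\<^sub>i) b\<^sub>i\<close> with
  \<open>g\<^sub>i(x) = 0\<close>; since \<open>\<phi>\<close> is central, this is a closed two-sided ideal.\<close>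

definition fibre_span :: "'x \<Rightarrow> 'a set"
  where "fibre_span x = {(\<Sum>i<n. \<phi> (g i) * b i) | (n::nat) (g::nat \<Rightarrow> 'x \<Rightarrow> complex) (b::nat \<Rightarrow> 'a).
     \<forall>i<n. continuous_on UNIV (g i) \<and> g i x = 0}"

lemma fibre_ideal_closure: "fibre_ideal \<phi> x = closure (fibre_span x)"
  unfolding fibre_ideal_def fibre_span_def by simp

lemma fibre_spanE:
  assumes "s \<in> fibre_span x"
  obtains g b and n :: nat where "s = (\<Sum>i<n. \<phi> (g i) * b i)" "\<And>i. i < n \<Longrightarrow> continuous_on UNIV (g i) \<and> g i x = 0"
  using assms unfolding fibre_span_def by blast

lemma fibre_spanI:
  "(\<And>i. i < n \<Longrightarrow> continuous_on UNIV (g i) \<and> g i x = 0) \<Longrightarrow> (\<Sum>i<(n::nat). \<phi> (g i) * b i) \<in> fibre_span x"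
  unfolding fibre_span_def by blast

lemma fibre_span_add:
  assumes "s \<in> fibre_span x" "s' \<in> fibre_span x"
  shows "s + s' \<in> fibre_span x"
proof -
  obtain g b and n :: nat where s: "s = (\<Sum>i<n. \<phi> (g i) * b i)" "\<And>i. i < n \<Longrightarrow> continuous_on UNIV (g i) \<and> g i x = 0"
    using assms(1) by (rule fibre_spanE) blast
  obtain g' b' and n' :: nat where s': "s' = (\<Sum>i<n'. \<phi> (g' i) * b' i)"
      "\<And>i. i < n' \<Longrightarrow> continuous_on UNIV (g' i) \<and> g' i x = 0"
    using assms(2) by (rule fibre_spanE) blast
  define G where "G i = (if i < n then g i else g' (i - n))" for i
  define B where "B i = (if i < n then b i else b' (i - n))" for i
  have "(\<Sum>i<n + n'. \<phi> (G i) * B i) = s + s'"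
    unfolding sum_lessThan_add_split s(1) s'(1) G_def B_def by simp
  moreover have "(\<Sum>i<n + n'. \<phi> (G i) * B i) \<in> fibre_span x"
    by (rule fibre_spanI) (use s(2) s'(2) in \<open>auto simp: G_def\<close>)
  ultimately show ?thesis by simp
qed

lemma fibre_span_lmult:
  assumes "s \<in> fibre_span x"
  shows "a * s \<in> fibre_span x"
proof -
  obtain g b and n :: nat where s: "s = (\<Sum>i<n. \<phi> (g i) * b i)" "\<And>i. i < n \<Longrightarrow> continuous_on UNIV (g i) \<and> g i x = 0"
    using assms by (rule fibre_spanE) blast
  have "a * s = (\<Sum>i<n. \<phi> (g i) * (a * b i))"
    unfolding s(1) sum_distrib_left
  proof (rule sum.cong)
    fix i assume "i \<in> {..<n}"
    then have "\<phi> (g i) * a = a * \<phi> (g i)" using s(2) phi_central by blast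
    then show "a * (\<phi> (g i) * b i) = \<phi> (g i) * (a * b i)" by (simp add: mult.assoc[symmetric])
  qed simp
  then show ?thesis using fibre_spanI[of n g x] s(2) by simp
qed

lemma fibre_span_rmult:
  assumes "s \<in> fibre_span x"
  shows "s * a \<in> fibre_span x"
proof -
  obtain g b and n :: nat where s: "s = (\<Sum>i<n. \<phi> (g i) * b i)" "\<And>i. i < n \<Longrightarrow> continuous_on UNIV (g i) \<and> g i x = 0"
    using assms by (rule fibre_spanE) blast
  have "s * a = (\<Sum>i<n. \<phi> (g i) * (b i * a))"
    unfolding s(1) sum_distrib_right by (simp add: mult.assoc)
  then show ?thesis using fibre_spanI[of n g x] s(2) by simp
qed

lemma fibre_ideal_lmult: "z \<in> fibre_ideal \<phi> x \<Longrightarrow> a * z \<in> fibre_ideal \<phi> x"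
  unfolding fibre_ideal_closure
  by (rule closure_invariant) (auto intro!: continuous_intros fibre_span_lmult closure_subset[THEN subsetD])

lemma fibre_ideal_rmult: "z \<in> fibre_ideal \<phi> x \<Longrightarrow> z * a \<in> fibre_ideal \<phi> x"
  unfolding fibre_ideal_closure
  by (rule closure_invariant) (auto intro!: continuous_intros fibre_span_rmult closure_subset[THEN subsetD])

lemma fibre_ideal_add:
  assumes z: "z \<in> fibre_ideal \<phi> x" and z': "z' \<in> fibre_ideal \<phi> x"
  shows "z + z' \<in> fibre_ideal \<phi> x"
proof -
  have "z + s \<in> closure (fibre_span x)" if s: "s \<in> fibre_span x" for s
  proof (rule closure_invariant[of "\<lambda>z. z + s"])
    show "t + s \<in> closure (fibre_span x)" if "t \<in> fibre_span x" for t
      using fibre_span_add[OF that s] closure_subset by blast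
  qed (use z in \<open>auto intro!: continuous_intros simp: fibre_ideal_closure\<close>)
  moreover have "z' \<in> closure (fibre_span x)" using z' by (simp add: fibre_ideal_closure)
  ultimately show ?thesis unfolding fibre_ideal_closure
    using closure_invariant[of "\<lambda>w. z + w" "fibre_span x" z']
      continuous_on_add[OF continuous_on_const continuous_on_id, of UNIV z] by auto
qed

lemma fibre_ideal_diff:
  assumes "z \<in> fibre_ideal \<phi> x" "z' \<in> fibre_ideal \<phi> x"
  shows "z - z' \<in> fibre_ideal \<phi> x"
  using fibre_ideal_add[OF assms(1) fibre_ideal_lmult[OF assms(2), of "- 1"]] by simp

text \<open>If the fibre at x is properly infinite, with isometries v, w whose range projections
  are orthogonal modulo the ideal, then \<open>v\<^sup>* w = v\<^sup>* (v v\<^sup>*)(w w\<^sup>*) w\<close> lies in the ideal too.\<close>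

lemma fibre_orthogonal_isometries:
  assumes "properly_infinite_mod st (fibre_ideal \<phi> x)"
  obtains v w where "st v * v - 1 \<in> fibre_ideal \<phi> x" "st w * w - 1 \<in> fibre_ideal \<phi> x"
    "st v * w \<in> fibre_ideal \<phi> x"
proof -
  obtain e f v w where H: "e * f \<in> fibre_ideal \<phi> x"
    "st v * v - 1 \<in> fibre_ideal \<phi> x" "v * st v - e \<in> fibre_ideal \<phi> x"
    "st w * w - 1 \<in> fibre_ideal \<phi> x" "w * st w - f \<in> fibre_ideal \<phi> x"
    using assms unfolding properly_infinite_mod_def by blast
  define T where "T = (v * st v - e) * (w * st w) + e * (w * st w - f) + e * f"
  have "T \<in> fibre_ideal \<phi> x"
    unfolding T_def by (intro fibre_ideal_add fibre_ideal_rmult[OF H(3)] fibre_ideal_lmult[OF H(5)] H(1))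
  then have "st v * T * w \<in> fibre_ideal \<phi> x"
    by (rule fibre_ideal_rmult[OF fibre_ideal_lmult])
  moreover have "(st v * v - 1) * (st v * w * (st w * w)) \<in> fibre_ideal \<phi> x"
    by (rule fibre_ideal_rmult[OF H(2)])
  moreover have "st v * w * (st w * w - 1) \<in> fibre_ideal \<phi> x"
    by (rule fibre_ideal_lmult[OF H(4)])
  ultimately have "st v * T * w - (st v * v - 1) * (st v * w * (st w * w)) - st v * w * (st w * w - 1)
      \<in> fibre_ideal \<phi> x"
    by (intro fibre_ideal_diff)
  moreover have "st v * T * w - (st v * v - 1) * (st v * w * (st w * w)) - st v * w * (st w * w - 1)
      = st v * w"
  proof -
    have "st v * T * w = (st v * v) * (st v * w) * (st w * w)"
      unfolding T_def by (simp only: telescope_left mult.assoc)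
    then show ?thesis by (simp only: telescope_right)
  qed
  ultimately show ?thesis using that H(2,4) by simp
qed

lemma norm_proj_le_one: "clopen U \<Longrightarrow> norm (proj U) \<le> 1"
  using central_projectionD(1,2)[OF proj_central_projection] by (rule norm_projection)

lemma proj_shrink:
  assumes U: "clopen U" and W: "clopen W" and WU: "W \<subseteq> U"
  shows "norm (proj W * a) \<le> norm (proj U * a)"
proof -
  have "proj W = proj W * proj U" using proj_Int[OF W U, unfolded Int_absorb2[OF WU]] .
  then have "proj W * a = proj W * proj U * a" by (rule arg_cong[where f="\<lambda>q. q * a"])
  also have "\<dots> = proj W * (proj U * a)" by (simp only: mult.assoc)
  also have "norm \<dots> \<le> norm (proj W) * norm (proj U * a)" by (rule norm_mult_ineq)
  also have "\<dots> \<le> norm (proj U * a)"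
    using norm_proj_le_one[OF W] by (simp add: mult_left_le_one_le)
  finally show ?thesis .
qed

end

locale cx_alg_zero_dim = cx_alg sc st \<phi>
  for sc :: "complex \<Rightarrow> 'a::{real_normed_algebra_1,banach} \<Rightarrow> 'a" and st :: "'a \<Rightarrow> 'a"
    and \<phi> :: "('x::topological_space \<Rightarrow> complex) \<Rightarrow> 'a" +
  assumes clopen_base: "\<And>N (y::'x). open N \<Longrightarrow> y \<in> N \<Longrightarrow> \<exists>U. clopen U \<and> y \<in> U \<and> U \<subseteq> N"
begin

text \<open>An element \<open>\<Sum> \<phi>(g\<^sub>i) b\<^sub>i\<close> of the fibre span at x becomes small after cutting down to a
  clopen neighbourhood of x on which all \<open>g\<^sub>i\<close> are small.\<close>

lemma fibre_span_locally_small: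
  assumes s: "s \<in> fibre_span x" and e: "\<epsilon> > 0"
  obtains U where "clopen U" "x \<in> U" "norm (proj U * s) \<le> \<epsilon>"
proof -
  obtain g b and n :: nat where sd: "s = (\<Sum>i<n. \<phi> (g i) * b i)"
      "\<And>i. i < n \<Longrightarrow> continuous_on UNIV (g i) \<and> g i x = 0"
    using s by (rule fibre_spanE) blast
  define B where "B = (\<Sum>i<n. norm (b i))"
  have B0: "B \<ge> 0" unfolding B_def by (simp add: sum_nonneg)
  define \<delta> where "\<delta> = \<epsilon> / (2 * (B + 1))"
  have d0: "\<delta> > 0" unfolding \<delta>_def using e B0 by simp
  define N where "N = (\<Inter>i\<in>{..<n}. g i -` ball 0 \<delta>)"
  have "open N" unfolding N_def
    by (intro open_INT finite_lessThan ballI open_vimage open_ball) (use sd(2) in auto)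
  moreover have "x \<in> N" unfolding N_def using sd(2) d0 by auto
  ultimately obtain U where U: "clopen U" "x \<in> U" "U \<subseteq> N" using clopen_base by blast
  note cU = continuous_on_indicator_clopen[OF U(1)]
  have ps: "proj U * s = (\<Sum>i<n. \<phi> (\<lambda>t. indicator U t * g i t) * b i)"
    unfolding sd(1) sum_distrib_left
    by (rule sum.cong) (use sd(2) in \<open>auto simp: phi_mult[OF cU] mult.assoc\<close>)
  have nb: "norm (\<phi> (\<lambda>t. indicator U t * g i t) * b i) \<le> 2 * \<delta> * norm (b i)" if "i < n" for i
  proof -
    have "norm (indicator U t * g i t) \<le> \<delta>" for t
    proof (cases "t \<in> U")
      case True
      then have "g i t \<in> ball 0 \<delta>" using U(3) that unfolding N_def by blast
      then show ?thesis using True by (simp add: dist_norm)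
    qed (use d0 in simp)
    then have "norm (\<phi> (\<lambda>t. indicator U t * g i t)) \<le> 2 * \<delta>"
      using sd(2)[OF that] cU d0 by (intro phi_bound) (auto intro!: continuous_intros)
    then have "norm (\<phi> (\<lambda>t. indicator U t * g i t)) * norm (b i) \<le> 2 * \<delta> * norm (b i)"
      by (rule mult_right_mono) simp
    then show ?thesis using norm_mult_ineq order_trans by blast
  qed
  have "norm (proj U * s) \<le> (\<Sum>i<n. 2 * \<delta> * norm (b i))"
    unfolding ps using nb by (intro order_trans[OF norm_sum sum_mono]) auto
  also have "\<dots> = 2 * \<delta> * B" unfolding B_def by (simp add: sum_distrib_left)
  also have "\<dots> = \<epsilon> * B / (B + 1)" unfolding \<delta>_def using B0 by (simp add: field_simps)
  also have "\<dots> \<le> \<epsilon>" using B0 e by (simp add: field_simps)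
  finally show ?thesis using that U(1,2) by blast
qed

text \<open>By density, the same holds for every element of the fibre ideal.\<close>

lemma fibre_ideal_locally_small:
  assumes a: "a \<in> fibre_ideal \<phi> x" and e: "\<epsilon> > 0"
  obtains U where "clopen U" "x \<in> U" "norm (proj U * a) \<le> \<epsilon>"
proof -
  have e2: "\<epsilon>/2 > 0" using e by simp
  have "\<forall>d>0. \<exists>y\<in>fibre_span x. dist y a < d"
    using a by (simp add: fibre_ideal_closure closure_approachable)
  with e2 obtain s where s: "s \<in> fibre_span x" "dist s a < \<epsilon>/2" by blast
  obtain U where U: "clopen U" "x \<in> U" "norm (proj U * s) \<le> \<epsilon>/2"
    using fibre_span_locally_small[OF s(1) e2] by blast
  have "norm (proj U * (a - s)) \<le> norm (proj U) * norm (a - s)" by (rule norm_mult_ineq)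
  also have "\<dots> \<le> norm (a - s)"
    using norm_proj_le_one[OF U(1)] by (simp add: mult_left_le_one_le)
  also have "\<dots> < \<epsilon>/2" using s(2) by (simp add: dist_norm norm_minus_commute)
  finally have small: "norm (proj U * (a - s)) < \<epsilon>/2" .
  have "norm (proj U * a) = norm (proj U * (a - s) + proj U * s)" by (simp add: algebra_simps)
  also have "\<dots> \<le> norm (proj U * (a - s)) + norm (proj U * s)" by (rule norm_triangle_ineq)
  finally have "norm (proj U * a) \<le> \<epsilon>" using small U(3) by linarith
  with that U(1,2) show ?thesis by blast
qed

lemma fibre_ideal_locally_small_finite:
  assumes "finite A" "A \<subseteq> fibre_ideal \<phi> x" "\<epsilon> > 0"
  shows "\<exists>U. clopen U \<and> x \<in> U \<and> (\<forall>a\<in>A. norm (proj U * a) \<le> \<epsilon>)"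
  using assms(1,2)
proof (induction A rule: finite_induct)
  case empty
  show ?case by (intro exI[of _ UNIV]) simp
next
  case (insert a A)
  then obtain U where U: "clopen U" "x \<in> U" "\<forall>a\<in>A. norm (proj U * a) \<le> \<epsilon>" by auto
  obtain V where V: "clopen V" "x \<in> V" "norm (proj V * a) \<le> \<epsilon>"
    using fibre_ideal_locally_small[of a x \<epsilon>] insert.prems assms(3) by auto
  have UV: "clopen (U \<inter> V)" using U(1) V(1) by auto
  have "norm (proj (U \<inter> V) * c) \<le> \<epsilon>" if "c \<in> insert a A" for c
  proof (cases "c = a")
    case True
    then show ?thesis using proj_shrink[OF V(1) UV Int_lower2, of c] V(3) by simp
  next
    case False
    then show ?thesis using that proj_shrink[OF U(1) UV Int_lower1, of c] U(3) by auto
  qed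
  then show ?case using UV U(2) V(2) by blast
qed

lemma corner_properly_infinite_near:
  assumes "properly_infinite_mod st (fibre_ideal \<phi> x)"
  obtains U where "clopen U" "x \<in> U" "corner_properly_infinite (proj U)"
proof -
  obtain v w where vw: "st v * v - 1 \<in> fibre_ideal \<phi> x" "st w * w - 1 \<in> fibre_ideal \<phi> x"
      "st v * w \<in> fibre_ideal \<phi> x"
    using fibre_orthogonal_isometries[OF assms] by blast
  have "\<exists>U. clopen U \<and> x \<in> U \<and>
      (\<forall>a\<in>{st v * v - 1, st w * w - 1, st v * w}. norm (proj U * a) \<le> 1/100)"
    by (rule fibre_ideal_locally_small_finite) (use vw in simp_all)
  then obtain U where U: "clopen U" "x \<in> U"
      "\<forall>a\<in>{st v * v - 1, st w * w - 1, st v * w}. norm (proj U * a) \<le> 1/100"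
    by blast
  have "corner_properly_infinite (proj U)"
    by (rule corner_properly_infinite_if_approx[OF proj_central_projection[OF U(1)], of v w])
      (use U(3) in simp_all)
  then show ?thesis using that U(1,2) by blast
qed

text \<open>Global step: by compactness finitely many such clopen sets cover X, and corners add up.\<close>

lemma corner_properly_infinite_one:
  assumes cpt: "compact (UNIV :: 'x set)"
    and fibres: "\<forall>x::'x. properly_infinite_mod st (fibre_ideal \<phi> x)"
  shows "corner_properly_infinite 1"
proof -
  let ?C = "{U. clopen U \<and> corner_properly_infinite (proj U)}"
  have cover: "UNIV \<subseteq> \<Union>?C"
  proof
    fix x :: 'x
    obtain U where "clopen U" "x \<in> U" "corner_properly_infinite (proj U)"
      using corner_properly_infinite_near fibres by blast
    then show "x \<in> \<Union>?C" by blast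
  qed
  then obtain F where F: "F \<subseteq> ?C" "finite F" "UNIV \<subseteq> \<Union>F"
    using compactE[OF cpt cover] by blast
  then have "corner_properly_infinite (proj (\<Union>F))"
    by (intro corner_properly_infinite_Union) auto
  moreover have "\<Union>F = UNIV" using F(3) by blast
  ultimately show ?thesis using proj_UNIV by simp
qed

end

theorem proposition6p4:
  fixes sc :: "complex \<Rightarrow> 'a::{real_normed_algebra_1,banach} \<Rightarrow> 'a"
    and st :: "'a \<Rightarrow> 'a"
    and \<phi> :: "('x::t2_space \<Rightarrow> complex) \<Rightarrow> 'a"
  assumes "cstar_algebra sc st"
    and "compact (UNIV :: 'x set)"
    and "\<forall>x::'x. connected_component_set UNIV x = {x}"
    and "cx_algebra sc st \<phi>"
    and "\<forall>x::'x. properly_infinite_mod st (fibre_ideal \<phi> x)"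
  shows "properly_infinite st (1::'a)"
proof -
  interpret cx_alg_zero_dim sc st \<phi>
  proof unfold_locales
    show "cstar_algebra sc st" "cx_algebra sc st \<phi>" by (fact assms(1), fact assms(4))
    show "\<exists>U. clopen U \<and> y \<in> U \<and> U \<subseteq> N" if "open N" "y \<in> N" for N and y :: 'x
      using totally_disconnected_clopen_base[OF assms(2,3) that] .
  qed
  show ?thesis
    by (intro properly_infinite_if_corner_one corner_properly_infinite_one assms(2,5))
qed

end
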